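(* If a closed-loop DT model $\bar F:\mathbb{R}^n\times(0,\infty)\to\mathbb{R}^n$ is SLES-VSR, then it is SS-VSR.
   Context: Solutions: $x_{k+1}=\bar F(x_k,T_k)$. $\Phi(T)$: set of sequences $\{T_i\}_{i\ge0}$ with $T_i\in(0,T)$; $\sum_{i=0}^{-1}T_i=0$. $\mathcal{KL}$: $\beta:\mathbb{R}_{\ge0}^2\to\mathbb{R}_{\ge0}$, continuous strictly increasing with $\beta(0,t)=0$ in the first argument, strictly decreasing to $0$ in the second. SPS-VSR: there is $\beta\in\mathcal{KL}$ such that for every $M\ge0$, $R>0$ there is $T^\star(M,R)>0$ with $|x_k|\le\beta(|x_0|,\sum_{i=0}^{k-1}T_i)+R$ for all $k\in\mathbb{N}_0$, $\{T_i\}\in\Phi(T^\star)$, $|x_0|\le M$. LES-VSR: there exist $K\ge1$, $R,T^\star,\lambda>0$ with $|x_k|\le K|x_0|e^{-\lambda\sum_{i=0}^{k-1}T_i}$ for all $k$, $\{T_i\}\in\Phi(T^\star)$, $|x_0|\le R$. SLES-VSR: SPS-VSR and LES-VSR. SS-VSR: there is $\beta\in\mathcal{KL}$ such that for every $M\ge0$ there is $T^\star(M)>0$ with $|x_k|\le\beta(|x_0|,\sum_{i=0}^{k-1}T_i)$ for all $k\in\mathbb{N}_0$, $\{T_i\}\in\Phi(T^\star)$, $|x_0|\le M$. *)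

theory Defs
  imports "HOL-Analysis.Analysis"
begin

primrec traj :: "('a \<Rightarrow> real \<Rightarrow> 'a) \<Rightarrow> 'a \<Rightarrow> (nat \<Rightarrow> real) \<Rightarrow> nat \<Rightarrow> 'a" where
  "traj F x0 T 0 = x0"
| "traj F x0 T (Suc k) = F (traj F x0 T k) (T k)"

definition Phi :: "real \<Rightarrow> (nat \<Rightarrow> real) set" where
  "Phi Tm = {T. \<forall>i. 0 < T i \<and> T i < Tm}"

definition classKL :: "(real \<Rightarrow> real \<Rightarrow> real) \<Rightarrow> bool" where
  "classKL \<beta> \<longleftrightarrow>
     continuous_on ({0..} \<times> {0..}) (\<lambda>(s,t). \<beta> s t) \<and>
     (\<forall>s\<ge>0. \<forall>t\<ge>0. \<beta> s t \<ge> 0) \<and>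
     (\<forall>t\<ge>0. \<beta> 0 t = 0 \<and> strict_mono_on {0..} (\<lambda>s. \<beta> s t)) \<and>
     (\<forall>s>0. (\<forall>t1 t2. 0 \<le> t1 \<longrightarrow> t1 < t2 \<longrightarrow> \<beta> s t2 < \<beta> s t1) \<and>
             ((\<lambda>t. \<beta> s t) \<longlongrightarrow> 0) at_top)"

definition SPS_VSR :: "('a::real_normed_vector \<Rightarrow> real \<Rightarrow> 'a) \<Rightarrow> bool" where
  "SPS_VSR F \<longleftrightarrow> (\<exists>\<beta>. classKL \<beta> \<and>
     (\<forall>M\<ge>0. \<forall>R>0. \<exists>Ts>0. \<forall>k x0 T. T \<in> Phi Ts \<longrightarrow> norm x0 \<le> M \<longrightarrow>
        norm (traj F x0 T k) \<le> \<beta> (norm x0) (\<Sum>i<k. T i) + R))"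

definition LES_VSR :: "('a::real_normed_vector \<Rightarrow> real \<Rightarrow> 'a) \<Rightarrow> bool" where
  "LES_VSR F \<longleftrightarrow> (\<exists>K R Ts lam::real. K \<ge> 1 \<and> R > 0 \<and> Ts > 0 \<and> lam > 0 \<and>
     (\<forall>k x0 T. T \<in> Phi Ts \<longrightarrow> norm x0 \<le> R \<longrightarrow>
        norm (traj F x0 T k) \<le> K * norm x0 * exp (- lam * (\<Sum>i<k. T i))))"

definition SLES_VSR :: "('a::real_normed_vector \<Rightarrow> real \<Rightarrow> 'a) \<Rightarrow> bool" where
  "SLES_VSR F \<longleftrightarrow> SPS_VSR F \<and> LES_VSR F"

definition SS_VSR :: "('a::real_normed_vector \<Rightarrow> real \<Rightarrow> 'a) \<Rightarrow> bool" where
  "SS_VSR F \<longleftrightarrow> (\<exists>\<beta>. classKL \<beta> \<and>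
     (\<forall>M\<ge>0. \<exists>Ts>0. \<forall>k x0 T. T \<in> Phi Ts \<longrightarrow> norm x0 \<le> M \<longrightarrow>
        norm (traj F x0 T k) \<le> \<beta> (norm x0) (\<Sum>i<k. T i)))"

end

theory Submission
  imports Defs
begin

(*
  Let s = |x0| and t_k = T_0 + ... + T_(k-1), and use semiglobal practical stability with
  offset R/2, where R is the radius of the local exponential estimate. While beta(s, t_k) >= R/2
  this gives |x_k| <= 2 beta(s, t_k). At the first index m with beta(s, t_m) < R/2 the state lies
  in the ball of radius R, so from then on |x_k| <= K |x_m| exp(-lam (t_k - t_m)) with
  |x_m| < R <= 2 beta(s, t_(m-1)). Distinguishing t_m >= t_k/2 from t_m < t_k/2, and using
  t_(m-1) > t_m - 1 for sampling periods below 1, all cases are dominated by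
  2K (beta(s, max(t/2 - 1, 0)) + (beta(s, 0) + s) exp(-lam t/2)), which is of class KL:
  its first summand is only nonincreasing in t, but the second is strictly decreasing.
*)

lemma traj_add: "traj F x0 T (m + j) = traj F (traj F x0 T m) (\<lambda>i. T (m + i)) j"
  by (induction j) auto

lemma sum_lessThan_add:
  fixes f :: "nat \<Rightarrow> 'a::comm_monoid_add"
  shows "(\<Sum>i<m + j. f i) = (\<Sum>i<m. f i) + (\<Sum>i<j. f (m + i))"
  by (induction j) (auto simp: add.assoc)

lemma Phi_shift: "T \<in> Phi Ts \<Longrightarrow> (\<lambda>i. T (m + i)) \<in> Phi Ts"
  by (simp add: Phi_def)

lemma Phi_min_iff: "T \<in> Phi (min Ts Ts') \<longleftrightarrow> T \<in> Phi Ts \<and> T \<in> Phi Ts'"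
  by (auto simp: Phi_def)

lemma sum_Phi_nonneg: "T \<in> Phi Ts \<Longrightarrow> 0 \<le> (\<Sum>i<k. T i)"
  by (auto simp: Phi_def intro: sum_nonneg less_imp_le)

lemma sum_Phi_mono: "T \<in> Phi Ts \<Longrightarrow> m \<le> k \<Longrightarrow> (\<Sum>i<m. T i) \<le> (\<Sum>i<k. T i)"
  by (auto simp: Phi_def intro: sum_mono2 less_imp_le)

definition nonstrict_classKL :: "(real \<Rightarrow> real \<Rightarrow> real) \<Rightarrow> bool" where
  "nonstrict_classKL \<gamma> \<longleftrightarrow>
     continuous_on ({0..} \<times> {0..}) (\<lambda>(s,t). \<gamma> s t) \<and>
     (\<forall>t\<ge>0. \<gamma> 0 t = 0 \<and> mono_on {0..} (\<lambda>s. \<gamma> s t)) \<and>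
     (\<forall>s\<ge>0. antimono_on {0..} (\<lambda>t. \<gamma> s t)) \<and>
     (\<forall>s>0. ((\<lambda>t. \<gamma> s t) \<longlongrightarrow> 0) at_top)"

lemma classKL_imp_nonstrict_classKL:
  assumes "classKL \<beta>"
  shows "nonstrict_classKL \<beta>"
  unfolding nonstrict_classKL_def
proof (intro conjI allI impI)
  show "continuous_on ({0..} \<times> {0..}) (\<lambda>(s, t). \<beta> s t)"
    using assms by (simp add: classKL_def)
  fix t :: real assume "0 \<le> t"
  with assms show "\<beta> 0 t = 0" "mono_on {0..} (\<lambda>s. \<beta> s t)"
    by (simp_all add: classKL_def strict_mono_on_imp_mono_on)
next
  fix s :: real assume "0 < s"
  with assms show "(\<beta> s \<longlongrightarrow> 0) at_top"
    by (simp add: classKL_def)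
next
  fix s :: real assume s: "0 \<le> s"
  show "antimono_on {0..} (\<beta> s)"
  proof (cases "s = 0")
    case True
    with assms show ?thesis by (simp add: classKL_def monotone_on_def)
  next
    case False
    with s assms show ?thesis
      unfolding classKL_def monotone_on_def by (metis atLeast_iff order_le_less order_less_le)
  qed
qed

lemma nonstrict_classKL_mono:
  assumes "nonstrict_classKL \<gamma>" "0 \<le> s" "s \<le> s'" "0 \<le> t"
  shows "\<gamma> s t \<le> \<gamma> s' t"
proof -
  have "mono_on {0..} (\<lambda>s. \<gamma> s t)"
    using assms by (simp add: nonstrict_classKL_def)
  then show ?thesis
    by (rule monotone_onD) (use assms in auto)
qed

lemma nonstrict_classKL_antimono:
  assumes "nonstrict_classKL \<gamma>" "0 \<le> s" "0 \<le> t" "t \<le> t'"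
  shows "\<gamma> s t' \<le> \<gamma> s t"
proof -
  have "antimono_on {0..} (\<lambda>t. \<gamma> s t)"
    using assms by (simp add: nonstrict_classKL_def)
  then show ?thesis
    by (rule monotone_onD) (use assms in auto)
qed

lemma nonstrict_classKL_nonneg:
  "nonstrict_classKL \<gamma> \<Longrightarrow> 0 \<le> s \<Longrightarrow> 0 \<le> t \<Longrightarrow> 0 \<le> \<gamma> s t"
  using nonstrict_classKL_mono[of \<gamma> 0 s t] by (simp add: nonstrict_classKL_def)

lemma classKL_antimono: "classKL \<beta> \<Longrightarrow> 0 \<le> s \<Longrightarrow> 0 \<le> t \<Longrightarrow> t \<le> t' \<Longrightarrow> \<beta> s t' \<le> \<beta> s t"
  by (blast intro: nonstrict_classKL_antimono classKL_imp_nonstrict_classKL)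

lemma classKL_nonneg: "classKL \<beta> \<Longrightarrow> 0 \<le> s \<Longrightarrow> 0 \<le> t \<Longrightarrow> 0 \<le> \<beta> s t"
  by (simp add: classKL_def)

lemma nonstrict_classKL_time_change:
  assumes \<gamma>: "nonstrict_classKL \<gamma>"
    and \<phi>: "continuous_on {0..} \<phi>" "\<phi> ` {0..} \<subseteq> {0..}" "mono_on {0..} \<phi>" "filterlim \<phi> at_top at_top"
  shows "nonstrict_classKL (\<lambda>s t. \<gamma> s (\<phi> t))"
proof -
  have "continuous_on ({0..} \<times> {0..}) ((\<lambda>(s,t). \<gamma> s t) \<circ> (\<lambda>(s,t). (s, \<phi> t)))"
  proof (rule continuous_on_compose)
    show "continuous_on ({0..} \<times> {0..}) (\<lambda>(s, t). (s, \<phi> t))"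
      unfolding case_prod_beta
      by (intro continuous_intros continuous_on_compose2[OF \<phi>(1)]) auto
    show "continuous_on ((\<lambda>(s, t). (s, \<phi> t)) ` ({0..} \<times> {0..})) (\<lambda>(s, t). \<gamma> s t)"
      using \<gamma> \<phi>(2) unfolding nonstrict_classKL_def
      by (elim conjE continuous_on_subset) auto
  qed
  moreover have "antimono_on {0..} (\<lambda>t. \<gamma> s (\<phi> t))" if "s \<ge> 0" for s
    using \<phi>(2,3) that
    by (intro monotone_onI nonstrict_classKL_antimono[OF \<gamma>] monotone_onD[OF \<phi>(3)]) auto
  moreover have "((\<lambda>t. \<gamma> s (\<phi> t)) \<longlongrightarrow> 0) at_top" if "s > 0" for s
    using \<gamma> that \<phi>(4) unfolding nonstrict_classKL_def by (blast intro: filterlim_compose)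
  ultimately show ?thesis
    using \<gamma> \<phi>(2) unfolding nonstrict_classKL_def by (auto simp: o_def case_prod_beta)
qed

lemma classKL_add_nonstrict:
  assumes \<gamma>: "nonstrict_classKL \<gamma>" and \<beta>: "classKL \<beta>"
  shows "classKL (\<lambda>s t. \<gamma> s t + \<beta> s t)"
proof -
  have "continuous_on ({0..} \<times> {0..}) (\<lambda>(s,t). \<gamma> s t + \<beta> s t)"
    using continuous_on_add[of _ "\<lambda>(s,t). \<gamma> s t" "\<lambda>(s,t). \<beta> s t"] \<gamma> \<beta>
    unfolding nonstrict_classKL_def classKL_def by (simp add: case_prod_beta)
  moreover have "strict_mono_on {0..} (\<lambda>s. \<gamma> s t + \<beta> s t)" if "t \<ge> 0" for t
    using \<beta> that unfolding classKL_def
    by (intro strict_mono_onI add_le_less_mono nonstrict_classKL_mono[OF \<gamma>])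
      (auto simp: strict_mono_on_def)
  moreover have "\<gamma> s t' + \<beta> s t' < \<gamma> s t + \<beta> s t" if "s > 0" "0 \<le> t" "t < t'" for s t t'
    using \<beta> that unfolding classKL_def
    by (intro add_le_less_mono nonstrict_classKL_antimono[OF \<gamma>]) auto
  moreover have "((\<lambda>t. \<gamma> s t + \<beta> s t) \<longlongrightarrow> 0) at_top" if "s > 0" for s
    using tendsto_add[of "\<gamma> s" 0 at_top "\<beta> s" 0] \<gamma> \<beta> that
    unfolding nonstrict_classKL_def classKL_def by simp
  ultimately show ?thesis
    using \<beta> \<gamma> nonstrict_classKL_nonneg[OF \<gamma>] unfolding classKL_def nonstrict_classKL_def
    by simp
qed

lemma classKL_scale:
  assumes \<beta>: "classKL \<beta>" and c: "0 < c"
  shows "classKL (\<lambda>s t. c * \<beta> s t)"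
  unfolding classKL_def
proof (intro conjI allI impI)
  show "continuous_on ({0..} \<times> {0..}) (\<lambda>(s, t). c * \<beta> s t)"
    using continuous_on_mult_left[of _ "\<lambda>(s,t). \<beta> s t" c] \<beta>
    by (simp add: classKL_def case_prod_beta)
  fix s t :: real assume "0 \<le> s" "0 \<le> t"
  with \<beta> c show "0 \<le> c * \<beta> s t"
    by (simp add: classKL_def)
next
  fix t :: real assume "0 \<le> t"
  with \<beta> c show "c * \<beta> 0 t = 0" "strict_mono_on {0..} (\<lambda>s. c * \<beta> s t)"
    by (auto simp: classKL_def strict_mono_on_def)
next
  fix s t1 t2 :: real assume "0 < s" "0 \<le> t1" "t1 < t2"
  with \<beta> c show "c * \<beta> s t2 < c * \<beta> s t1"
    by (simp add: classKL_def)
next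
  fix s :: real assume "0 < s"
  with \<beta> show "((\<lambda>t. c * \<beta> s t) \<longlongrightarrow> 0) at_top"
    using tendsto_mult_right_zero[of "\<beta> s" at_top c] by (simp add: classKL_def)
qed

lemma classKL_exp_decay:
  assumes \<alpha>: "continuous_on {0..} \<alpha>" "\<alpha> 0 = 0" "strict_mono_on {0..} \<alpha>" and c: "0 < c"
  shows "classKL (\<lambda>s t. \<alpha> s * exp (- c * t))"
  unfolding classKL_def
proof (intro conjI allI impI)
  have "continuous_on ({0..} \<times> {0..}) (\<lambda>p. \<alpha> (fst p) * exp (- c * snd p))"
    by (intro continuous_intros continuous_on_compose2[OF \<alpha>(1)]) auto
  then show "continuous_on ({0..} \<times> {0..}) (\<lambda>(s, t). \<alpha> s * exp (- c * t))"
    by (simp add: case_prod_beta)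
  fix s t :: real assume "0 \<le> s" "0 \<le> t"
  with \<alpha>(2) strict_mono_onD[OF \<alpha>(3), of 0 s] show "0 \<le> \<alpha> s * exp (- c * t)"
    by (cases "s = 0") (auto simp: less_eq_real_def)
next
  fix t :: real
  show "\<alpha> 0 * exp (- c * t) = 0" "strict_mono_on {0..} (\<lambda>s. \<alpha> s * exp (- c * t))"
    using \<alpha>(2,3) by (auto simp: strict_mono_on_def)
next
  fix s t1 t2 :: real assume "0 < s" "0 \<le> t1" "t1 < t2"
  with c \<alpha>(2) strict_mono_onD[OF \<alpha>(3), of 0 s] show "\<alpha> s * exp (- c * t2) < \<alpha> s * exp (- c * t1)"
    by simp
next
  fix s :: real
  show "((\<lambda>t. \<alpha> s * exp (- c * t)) \<longlongrightarrow> 0) at_top"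
    using c by (intro tendsto_mult_right_zero filterlim_compose[OF exp_at_bot]
        filterlim_tendsto_neg_mult_at_bot[OF tendsto_const] filterlim_ident) auto
qed

definition SS_gain :: "(real \<Rightarrow> real \<Rightarrow> real) \<Rightarrow> real \<Rightarrow> real \<Rightarrow> real \<Rightarrow> real" where
  "SS_gain \<beta> lam s t = \<beta> s (max (t / 2 - 1) 0) + (\<beta> s 0 + s) * exp (- (lam / 2) * t)"

lemma classKL_SS_gain:
  assumes \<beta>: "classKL \<beta>" and lam: "0 < lam"
  shows "classKL (SS_gain \<beta> lam)"
proof -
  have delayed: "nonstrict_classKL (\<lambda>s t. \<beta> s (max (t / 2 - 1) 0))"
  proof (rule nonstrict_classKL_time_change[OF classKL_imp_nonstrict_classKL[OF \<beta>]])
    show "continuous_on {0..} (\<lambda>t::real. max (t / 2 - 1) 0)"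
      by (intro continuous_intros) auto
    show "(\<lambda>t::real. max (t / 2 - 1) 0) ` {0..} \<subseteq> {0..}" "mono_on {0..} (\<lambda>t::real. max (t / 2 - 1) 0)"
      by (auto intro: monotone_onI)
    have "filterlim (\<lambda>t::real. - 1 + 1 / 2 * t) at_top at_top"
      by (intro filterlim_tendsto_add_at_top[OF tendsto_const]
          filterlim_tendsto_pos_mult_at_top[OF tendsto_const _ filterlim_ident]) simp
    then show "filterlim (\<lambda>t::real. max (t / 2 - 1) 0) at_top at_top"
      by (rule filterlim_at_top_mono) auto
  qed
  have "classKL (\<lambda>s t. (\<beta> s 0 + s) * exp (- (lam / 2) * t))"
  proof (rule classKL_exp_decay)
    have "continuous_on {0..} (\<lambda>s. (\<lambda>(s, t). \<beta> s t) (s, 0::real))"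
      using \<beta> unfolding classKL_def
      by (elim conjE continuous_on_compose2) (auto intro!: continuous_on_Pair continuous_on_id)
    then show "continuous_on {0..} (\<lambda>s. \<beta> s 0 + s)"
      by (intro continuous_intros) simp
    show "\<beta> 0 0 + 0 = 0" "strict_mono_on {0..} (\<lambda>s. \<beta> s 0 + s)"
      using \<beta> by (auto simp: classKL_def strict_mono_on_def intro: add_strict_mono)
  qed (use lam in simp)
  then show ?thesis
    unfolding SS_gain_def [abs_def] by (rule classKL_add_nonstrict[OF delayed])
qed

lemma SS_gain_ge:
  assumes \<beta>: "classKL \<beta>" and s: "0 \<le> s" and t: "0 \<le> t"
  shows "\<beta> s t \<le> SS_gain \<beta> lam s t"
proof -
  have nonneg: "0 \<le> \<beta> s (max (t / 2 - 1) 0)" "0 \<le> \<beta> s 0 * exp (- (lam / 2) * t)"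
    "0 \<le> s * exp (- (lam / 2) * t)"
    using classKL_nonneg[OF \<beta> s] s by simp_all
  have "\<beta> s t \<le> \<beta> s (max (t / 2 - 1) 0)"
    using t by (intro classKL_antimono[OF \<beta> s]) auto
  then show ?thesis
    using nonneg unfolding SS_gain_def distrib_right by linarith
qed

lemma SS_gain_ge_exp_decay:
  assumes \<beta>: "classKL \<beta>" and s: "0 \<le> s" and t: "0 \<le> t" and lam: "0 \<le> lam"
  shows "s * exp (- lam * t) \<le> SS_gain \<beta> lam s t"
proof -
  have nonneg: "0 \<le> \<beta> s (max (t / 2 - 1) 0)" "0 \<le> \<beta> s 0 * exp (- (lam / 2) * t)"
    "0 \<le> s * exp (- (lam / 2) * t)"
    using classKL_nonneg[OF \<beta> s] s by simp_all
  have "s * exp (- lam * t) \<le> s * exp (- (lam / 2) * t)"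
    using s t lam mult_nonneg_nonneg[OF lam t] by (intro mult_left_mono) auto
  then show ?thesis
    using nonneg unfolding SS_gain_def distrib_right by linarith
qed

lemma SS_gain_ge_delayed_decay:
  assumes \<beta>: "classKL \<beta>" and s: "0 \<le> s" and ab: "0 \<le> a" "a \<le> b" "b \<le> a + 1"
    and bt: "b \<le> t" and lam: "0 \<le> lam"
  shows "\<beta> s a * exp (- lam * (t - b)) \<le> SS_gain \<beta> lam s t"
proof -
  have nonneg: "0 \<le> \<beta> s (max (t / 2 - 1) 0)" "0 \<le> \<beta> s 0 * exp (- (lam / 2) * t)"
    "0 \<le> s * exp (- (lam / 2) * t)"
    using classKL_nonneg[OF \<beta> s] s by simp_all
  have "\<beta> s a * exp (- lam * (t - b)) \<le> \<beta> s (max (t / 2 - 1) 0) + \<beta> s 0 * exp (- (lam / 2) * t)"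
  proof (cases "t / 2 \<le> b")
    case True
    have "\<beta> s a * exp (- lam * (t - b)) \<le> \<beta> s a"
      using classKL_nonneg[OF \<beta> s ab(1)] lam bt by (simp add: mult_left_le)
    also have "\<dots> \<le> \<beta> s (max (t / 2 - 1) 0)"
      using True ab by (intro classKL_antimono[OF \<beta> s]) auto
    finally show ?thesis
      using nonneg(2) by linarith
  next
    case False
    have "lam * t \<le> lam * (2 * (t - b))"
      using False lam by (intro mult_left_mono) auto
    then have "exp (- lam * (t - b)) \<le> exp (- (lam / 2) * t)"
      by (simp add: algebra_simps)
    then have "\<beta> s a * exp (- lam * (t - b)) \<le> \<beta> s 0 * exp (- (lam / 2) * t)"
      using ab classKL_nonneg[OF \<beta> s] by (intro mult_mono classKL_antimono[OF \<beta> s]) auto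
    then show ?thesis
      using nonneg(1) by linarith
  qed
  then show ?thesis
    using nonneg(3) unfolding SS_gain_def distrib_right by linarith
qed

lemma traj_bound_from:
  fixes F :: "'a::real_normed_vector \<Rightarrow> real \<Rightarrow> 'a"
  assumes LES: "\<And>k y S. S \<in> Phi Ts \<Longrightarrow> norm y \<le> R \<Longrightarrow>
      norm (traj F y S k) \<le> K * norm y * exp (- lam * (\<Sum>i<k. S i))"
    and T: "T \<in> Phi Ts" and "m \<le> k" and xm: "norm (traj F x0 T m) \<le> R"
  shows "norm (traj F x0 T k)
    \<le> K * norm (traj F x0 T m) * exp (- lam * ((\<Sum>i<k. T i) - (\<Sum>i<m. T i)))"
proof -
  obtain j where k: "k = m + j"
    using \<open>m \<le> k\<close> le_Suc_ex by blast
  have "traj F x0 T k = traj F (traj F x0 T m) (\<lambda>i. T (m + i)) j"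
    by (simp add: k traj_add)
  moreover have "(\<Sum>i<k. T i) - (\<Sum>i<m. T i) = (\<Sum>i<j. T (m + i))"
    by (simp add: k sum_lessThan_add)
  ultimately show ?thesis
    using LES[OF Phi_shift[OF T] xm] by simp
qed

lemma SLES_traj_bound:
  fixes F :: "'a::real_normed_vector \<Rightarrow> real \<Rightarrow> 'a"
  assumes \<beta>: "classKL \<beta>" and K: "1 \<le> K" and lam: "0 < lam"
    and SPS: "\<And>k. norm (traj F x0 T k) \<le> \<beta> (norm x0) (\<Sum>i<k. T i) + R / 2"
    and LES: "\<And>k y S. S \<in> Phi Ts \<Longrightarrow> norm y \<le> R \<Longrightarrow>
      norm (traj F y S k) \<le> K * norm y * exp (- lam * (\<Sum>i<k. S i))"
    and T: "T \<in> Phi (min Ts 1)"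
  shows "norm (traj F x0 T k) \<le> 2 * K * SS_gain \<beta> lam (norm x0) (\<Sum>i<k. T i)"
proof -
  define s x t where "s = norm x0" and "x = traj F x0 T" and "t = (\<lambda>j. \<Sum>i<j. T i)"
  have Ts: "T \<in> Phi Ts" and T1: "T \<in> Phi 1"
    using T by (simp_all add: Phi_min_iff)
  have s: "0 \<le> s" and t: "\<And>j. 0 \<le> t j"
    using sum_Phi_nonneg[OF T1] by (simp_all add: s_def t_def)
  have SPS': "norm (x j) \<le> \<beta> s (t j) + R / 2" for j
    unfolding x_def s_def t_def by (rule SPS)
  have "\<exists>c. norm (x k) \<le> 2 * K * c \<and> c \<le> SS_gain \<beta> lam s (t k)"
  proof (cases "R / 2 \<le> \<beta> s (t k)")
    case True
    have "norm (x k) \<le> 2 * K * \<beta> s (t k)"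
      using SPS'[of k] True mult_right_mono[OF K classKL_nonneg[OF \<beta> s t[of k]]] by linarith
    then show ?thesis
      using SS_gain_ge[OF \<beta> s t] by blast
  next
    case False
    define m where "m = (LEAST j. \<beta> s (t j) < R / 2)"
    have m: "\<beta> s (t m) < R / 2" "m \<le> k"
      using False LeastI[of "\<lambda>j. \<beta> s (t j) < R / 2" k] Least_le[of "\<lambda>j. \<beta> s (t j) < R / 2" k]
      by (simp_all add: m_def)
    have xm: "norm (x m) < R"
      using SPS'[of m] m(1) by simp
    have decay: "norm (x k) \<le> K * norm (x m) * exp (- lam * (t k - t m))"
      using traj_bound_from[OF LES Ts m(2)] xm by (simp add: x_def t_def)
    show ?thesis
    proof (cases m)
      case 0
      then have "norm (x k) \<le> K * (s * exp (- lam * t k))"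
        using decay by (simp add: x_def s_def t_def mult.assoc)
      also have "\<dots> \<le> 2 * K * (s * exp (- lam * t k))"
        using K s by (intro mult_right_mono) auto
      finally show ?thesis
        using SS_gain_ge_exp_decay[OF \<beta> s t] lam by force
    next
      case (Suc j)
      have entry: "R / 2 \<le> \<beta> s (t j)"
        using not_less_Least[of j "\<lambda>j. \<beta> s (t j) < R / 2"] Suc by (simp add: m_def)
      have tm: "t j \<le> t m" "t m \<le> t j + 1" "t m \<le> t k"
        using T1 sum_Phi_mono[OF T1 m(2)] by (auto simp: Suc t_def Phi_def less_imp_le)
      have "norm (x k) \<le> K * (2 * \<beta> s (t j)) * exp (- lam * (t k - t m))"
        using K xm entry by (intro order.trans[OF decay] mult_right_mono mult_left_mono) auto
      then have "norm (x k) \<le> 2 * K * (\<beta> s (t j) * exp (- lam * (t k - t m)))"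
        by simp
      then show ?thesis
        using SS_gain_ge_delayed_decay[OF \<beta> s t tm] lam by force
    qed
  qed
  then obtain c where "norm (x k) \<le> 2 * K * c" "c \<le> SS_gain \<beta> lam s (t k)"
    by blast
  then have "norm (x k) \<le> 2 * K * SS_gain \<beta> lam s (t k)"
    using K mult_left_mono[of c "SS_gain \<beta> lam s (t k)" "2 * K"] by linarith
  then show ?thesis
    by (simp add: x_def s_def t_def)
qed

theorem lemma3:
  fixes F :: "real ^ 'n \<Rightarrow> real \<Rightarrow> real ^ 'n"
  assumes "SLES_VSR F"
  shows "SS_VSR F"
proof -
  obtain \<beta> where \<beta>: "classKL \<beta>" and SPS: "\<forall>M\<ge>0. \<forall>R>0. \<exists>Ts>0. \<forall>k x0 T. T \<in> Phi Ts \<longrightarrow>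
      norm x0 \<le> M \<longrightarrow> norm (traj F x0 T k) \<le> \<beta> (norm x0) (\<Sum>i<k. T i) + R"
    using assms unfolding SLES_VSR_def SPS_VSR_def by blast
  obtain K R Ts lam :: real where K: "1 \<le> K" and R: "0 < R" and Ts: "0 < Ts" and lam: "0 < lam"
    and LES: "\<And>k x0 T. T \<in> Phi Ts \<Longrightarrow> norm x0 \<le> R \<Longrightarrow>
      norm (traj F x0 T k) \<le> K * norm x0 * exp (- lam * (\<Sum>i<k. T i))"
    using assms unfolding SLES_VSR_def LES_VSR_def by auto
  have "\<exists>Tm>0. \<forall>k x0 T. T \<in> Phi Tm \<longrightarrow> norm x0 \<le> M \<longrightarrow>
      norm (traj F x0 T k) \<le> 2 * K * SS_gain \<beta> lam (norm x0) (\<Sum>i<k. T i)" if "0 \<le> M" for M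
  proof -
    obtain T1 where T1: "0 < T1" and SPS_M: "\<And>k x0 T. T \<in> Phi T1 \<Longrightarrow> norm x0 \<le> M \<Longrightarrow>
        norm (traj F x0 T k) \<le> \<beta> (norm x0) (\<Sum>i<k. T i) + R / 2"
      using SPS \<open>0 \<le> M\<close> R by (metis half_gt_zero)
    have "norm (traj F x0 T k) \<le> 2 * K * SS_gain \<beta> lam (norm x0) (\<Sum>i<k. T i)"
      if T: "T \<in> Phi (min T1 (min Ts 1))" and x0: "norm x0 \<le> M" for k x0 T
    proof (rule SLES_traj_bound[OF \<beta> K lam SPS_M LES])
      show "T \<in> Phi T1" "T \<in> Phi (min Ts 1)"
        using T by (simp_all add: Phi_min_iff)
    qed (rule x0)
    then show ?thesis
      using T1 Ts by (intro exI[of _ "min T1 (min Ts 1)"]) auto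
  qed
  moreover have "classKL (\<lambda>s t. 2 * K * SS_gain \<beta> lam s t)"
    using K by (intro classKL_scale[OF classKL_SS_gain[OF \<beta> lam]]) simp
  ultimately show ?thesis
    unfolding SS_VSR_def by blast
qed

end
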